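(* Let $(X,D)$ be an $\mathcal{F}$-metric space with respect to $(f,\alpha)\in\mathcal{F}\times[0,\infty)$. Then for every $a\in X$ and every $k>0$ there exists $r>0$ such that for all $b\in X$ with $D(a,b)\ge k$ and all $c\in X$, one has $D(a,c)+D(b,c)\ge r$.
   Context: $\mathcal{F}$ denotes the class of functions $f:(0,\infty)\to\mathbb{R}$ such that ($\mathcal{F}_1$) $f$ is non-decreasing, and ($\mathcal{F}_2$) for every sequence $(t_n)\subseteq(0,\infty)$, $\lim_n t_n=0$ iff $\lim_n f(t_n)=-\infty$. An $\mathcal{F}$-metric on a non-empty set $X$ is a map $D:X\times X\to[0,\infty)$ for which there exists $(f,\alpha)\in\mathcal{F}\times[0,\infty)$ such that: (D1) $D(x,y)=0$ iff $x=y$; (D2) $D(x,y)=D(y,x)$ for all $x,y$; (D3) for all $(x,y)\in X\times X$, every integer $N\ge2$ and every $u_1,\dots,u_N\in X$ with $u_1=x$, $u_N=y$: if $D(x,y)>0$ then $f(D(x,y))\le f\big(\sum_{i=1}^{N-1}D(u_i,u_{i+1})\big)+\alpha$. *)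

theory Defs
  imports Main "HOL-Analysis.Analysis"
begin

text \<open>The class F: functions on (0,infinity), represented as real => real,
  only their values on positive reals matter.\<close>
definition F_class :: "(real \<Rightarrow> real) \<Rightarrow> bool" where
  "F_class f \<longleftrightarrow>
     (\<forall>s t. 0 < s \<longrightarrow> s \<le> t \<longrightarrow> f s \<le> f t) \<and>
     (\<forall>t :: nat \<Rightarrow> real. (\<forall>n. 0 < t n) \<longrightarrow>
        (t \<longlonglongrightarrow> 0 \<longleftrightarrow> filterlim (\<lambda>n. f (t n)) at_bot sequentially))"

definition F_metric_wrt ::
  "'a set \<Rightarrow> ('a \<Rightarrow> 'a \<Rightarrow> real) \<Rightarrow> (real \<Rightarrow> real) \<Rightarrow> real \<Rightarrow> bool" where
  "F_metric_wrt X D f \<alpha> \<longleftrightarrow>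
     X \<noteq> {} \<and> F_class f \<and> 0 \<le> \<alpha> \<and>
     (\<forall>x\<in>X. \<forall>y\<in>X. 0 \<le> D x y) \<and>
     (\<forall>x\<in>X. \<forall>y\<in>X. D x y = 0 \<longleftrightarrow> x = y) \<and>
     (\<forall>x\<in>X. \<forall>y\<in>X. D x y = D y x) \<and>
     (\<forall>x\<in>X. \<forall>y\<in>X. \<forall>N::nat. \<forall>u::nat \<Rightarrow> 'a.
        2 \<le> N \<longrightarrow> (\<forall>i\<in>{1..N}. u i \<in> X) \<longrightarrow> u 1 = x \<longrightarrow> u N = y \<longrightarrow>
        0 < D x y \<longrightarrow> f (D x y) \<le> f (\<Sum>i=1..N-1. D (u i) (u (Suc i))) + \<alpha>)"

end

theory Submission
  imports Defs
begin

text \<open>Choose \<open>r\<close> so that \<open>f < f k - \<alpha>\<close> on \<open>(0, r)\<close>, which is possible since \<open>f(t) \<rightarrow> -\<infinity>\<close>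
  as \<open>t \<rightarrow> 0\<^sup>+\<close>. If \<open>D(a,c) + D(b,c) < r\<close> for some \<open>c\<close>, then the sum is positive (else
  \<open>a = c = b\<close>), and the triangle axiom along the path \<open>a, c, b\<close> together with monotonicity
  of \<open>f\<close> gives \<open>f k \<le> f (D a b) \<le> f (D a c + D b c) + \<alpha> < f k\<close>.\<close>

lemma F_class_mono:
  assumes "F_class f" "0 < s" "s \<le> t"
  shows "f s \<le> f t"
  using assms unfolding F_class_def by blast

lemma F_class_eventually_less:
  assumes "F_class f"
  shows "\<exists>r>0. \<forall>t. 0 < t \<longrightarrow> t < r \<longrightarrow> f t < M"
proof (rule ccontr)
  assume "\<not> ?thesis"
  moreover have "(0::real) < 1 / (real n + 1)" for n :: nat
    by simp
  ultimately have "\<forall>n::nat. \<exists>t. 0 < t \<and> t < 1 / (real n + 1) \<and> M \<le> f t"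
    by (meson not_less)
  then obtain t where t: "\<And>n. 0 < t n" "\<And>n. t n < 1 / (real n + 1)" "\<And>n. M \<le> f (t n)"
    by metis
  have "t \<longlonglongrightarrow> 0"
  proof (rule real_tendsto_sandwich[of "\<lambda>_. 0" _ _ "\<lambda>n. 1 / (real n + 1)"])
    show "(\<lambda>n. 1 / (real n + 1)) \<longlonglongrightarrow> 0"
      using LIMSEQ_inverse_real_of_nat by (simp add: inverse_eq_divide add.commute)
  qed (use t in \<open>auto intro: less_imp_le always_eventually\<close>)
  then have "filterlim (\<lambda>n. f (t n)) at_bot sequentially"
    using assms t(1) unfolding F_class_def by blast
  then have "\<forall>\<^sub>F n in sequentially. f (t n) < M"
    by (simp add: filterlim_at_bot_dense)
  then obtain n where "f (t n) < M"
    by (meson eventually_sequentially order_refl)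
  with t(3) show False
    by (meson not_less)
qed

lemma F_metricD:
  assumes "F_metric_wrt X D f \<alpha>"
  shows "F_class f"
    and "x \<in> X \<Longrightarrow> y \<in> X \<Longrightarrow> 0 \<le> D x y"
    and "x \<in> X \<Longrightarrow> y \<in> X \<Longrightarrow> D x y = 0 \<longleftrightarrow> x = y"
    and "x \<in> X \<Longrightarrow> y \<in> X \<Longrightarrow> D x y = D y x"
  using assms unfolding F_metric_wrt_def by simp_all

lemma F_metric_triangle:
  assumes "F_metric_wrt X D f \<alpha>" "a \<in> X" "b \<in> X" "c \<in> X" "0 < D a b"
  shows "f (D a b) \<le> f (D a c + D b c) + \<alpha>"
proof -
  define u where "u = (\<lambda>i::nat. if i = 1 then a else if i = 2 then c else b)"
  have "\<forall>i\<in>{1..3}. u i \<in> X" "u 1 = a" "u 3 = b"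
    using assms by (auto simp: u_def)
  moreover have "\<forall>N u. 2 \<le> N \<longrightarrow> (\<forall>i\<in>{1..N}. u i \<in> X) \<longrightarrow> u 1 = a \<longrightarrow> u N = b \<longrightarrow>
      f (D a b) \<le> f (\<Sum>i=1..N-1. D (u i) (u (Suc i))) + \<alpha>"
    using assms unfolding F_metric_wrt_def by blast
  ultimately have "f (D a b) \<le> f (\<Sum>i=1..3-1. D (u i) (u (Suc i))) + \<alpha>"
    by (auto dest!: spec[of _ 3] spec[of _ u])
  moreover have "(\<Sum>i=1..3-1. D (u i) (u (Suc i))) = D a c + D b c"
    using F_metricD(4)[OF assms(1,3,4)] by (simp add: u_def numeral_3_eq_3 numeral_2_eq_2)
  ultimately show ?thesis
    by simp
qed

lemma F_metric_dist_sum_pos: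
  assumes "F_metric_wrt X D f \<alpha>" "a \<in> X" "b \<in> X" "c \<in> X" "a \<noteq> b"
  shows "0 < D a c + D b c"
proof -
  have "0 \<le> D a c" "0 \<le> D b c"
    using F_metricD(2)[OF assms(1)] assms(2-4) by simp_all
  moreover have "D a c \<noteq> 0 \<or> D b c \<noteq> 0"
    using F_metricD(3)[OF assms(1)] assms(2-5) by metis
  ultimately show ?thesis
    by linarith
qed

theorem mainTheorem5:
  fixes X :: "'a set" and D :: "'a \<Rightarrow> 'a \<Rightarrow> real" and f :: "real \<Rightarrow> real" and \<alpha> :: real
  assumes "F_metric_wrt X D f \<alpha>"
  shows "\<forall>a\<in>X. \<forall>k>0. \<exists>r>0. \<forall>b\<in>X. D a b \<ge> k \<longrightarrow> (\<forall>c\<in>X. D a c + D b c \<ge> r)"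
proof (intro ballI allI impI)
  fix a and k :: real
  assume a: "a \<in> X" and k: "0 < k"
  have f: "F_class f"
    using F_metricD(1)[OF assms] .
  obtain r where r: "r > 0" "\<And>t. 0 < t \<Longrightarrow> t < r \<Longrightarrow> f t < f k - \<alpha>"
    using F_class_eventually_less[OF f] by blast
  have "r \<le> D a c + D b c" if b: "b \<in> X" "k \<le> D a b" and c: "c \<in> X" for b c
  proof (rule ccontr)
    assume "\<not> r \<le> D a c + D b c"
    moreover have "0 < D a b"
      using k b(2) by linarith
    moreover from this have "0 < D a c + D b c"
      using F_metric_dist_sum_pos[OF assms a b(1) c] F_metricD(3)[OF assms a a] by (metis less_irrefl)
    ultimately have "f (D a c + D b c) + \<alpha> < f k"
      using r(2) by fastforce
    moreover have "f k \<le> f (D a b)"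
      using F_class_mono[OF f k b(2)] .
    ultimately show False
      using F_metric_triangle[OF assms a b(1) c \<open>0 < D a b\<close>] by simp
  qed
  with r(1) show "\<exists>r>0. \<forall>b\<in>X. k \<le> D a b \<longrightarrow> (\<forall>c\<in>X. r \<le> D a c + D b c)"
    by blast
qed

end
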